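(* Let $(X,d)$ be a compact metric space, $(\Omega,\mathcal{B},\mathbf{P})$ a probability space, and $\xi=\xi(x)=\xi(x,\omega)$, $x\in X$, a separable real-valued random field which is continuous with respect to $d$ with probability one. Let $\Phi$ be an Orlicz function satisfying the $\Delta_2$ condition $\overline{\lim}_{u\to\infty}\Phi(2u)/\Phi(u)<\infty$, and assume $$\Big\|\sup_{x\in X}|\xi(x)|\Big\|_{\Phi}<\infty .$$ Then there exist a random variable $\tau_0\ge 0$ with $\|\tau_0\|_{\Phi}=1$ and a non-random function $g:[0,\operatorname{diam}(d,X)]\to[0,\infty)$ which is continuous, strictly increasing, with $g(0)=g(0+)=0$, such that with probability one $$\Delta(\xi,\delta)\le \tau_0\cdot g(\delta)\quad\text{for all }\delta\in[0,\operatorname{diam}(d,X)].$$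
   Context: For a function $f:X\to\mathbb{R}$ the modulus of continuity is $\Delta(f,\delta)=\sup_{d(x,y)\le\delta}|f(x)-f(y)|$, $\delta\ge0$, and $\operatorname{diam}(d,X)=\sup_{x,y\in X}d(x,y)$. An Orlicz function is a function $\Phi:\mathbb{R}\to[0,\infty)$ that is convex, even, continuous, twice continuously differentiable on $u\ge2$, strictly increasing on $[0,\infty)$, with $\Phi(0)=0$ and $\lim_{|u|\to\infty}\Phi(u)=\infty$. The Orlicz space $L(\Phi)$ over $(\Omega,\mathcal{B},\mathbf{P})$ carries the Luxemburg norm $\|\zeta\|_{\Phi}=\inf\{k>0:\ \mathbf{E}\,\Phi(\zeta/k)\le1\}$. *)

theory Defs
  imports "HOL-Probability.Probability"
begin

definition modulus_cont :: "'a::metric_space set \<Rightarrow> ('a \<Rightarrow> real) \<Rightarrow> real \<Rightarrow> real" where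
  "modulus_cont X f \<delta> = (SUP p \<in> {(x,y). x \<in> X \<and> y \<in> X \<and> dist x y \<le> \<delta>}. \<bar>f (fst p) - f (snd p)\<bar>)"

definition orlicz_function :: "(real \<Rightarrow> real) \<Rightarrow> bool" where
  "orlicz_function \<Phi> \<longleftrightarrow>
     (\<forall>u. \<Phi> u \<ge> 0) \<and>
     convex_on UNIV \<Phi> \<and>
     (\<forall>u. \<Phi> (- u) = \<Phi> u) \<and>
     continuous_on UNIV \<Phi> \<and>
     (\<exists>\<Phi>' \<Phi>''. (\<forall>u\<ge>2. (\<Phi> has_real_derivative \<Phi>' u) (at u within {2..}) \<and>
                        (\<Phi>' has_real_derivative \<Phi>'' u) (at u within {2..})) \<and>
                 continuous_on {2..} \<Phi>'') \<and>
     strict_mono_on {0..} \<Phi> \<and>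
     \<Phi> 0 = 0 \<and>
     filterlim \<Phi> at_top at_top \<and> filterlim \<Phi> at_top at_bot"

definition delta2 :: "(real \<Rightarrow> real) \<Rightarrow> bool" where
  "delta2 \<Phi> \<longleftrightarrow> Limsup at_top (\<lambda>u. ereal (\<Phi> (2 * u) / \<Phi> u)) < \<infinity>"

text \<open>Luxemburg norm (value \<infinity> if no admissible k exists).\<close>
definition orlicz_norm :: "'b measure \<Rightarrow> (real \<Rightarrow> real) \<Rightarrow> ('b \<Rightarrow> real) \<Rightarrow> ereal" where
  "orlicz_norm M \<Phi> \<zeta> =
     Inf (ereal ` {k. k > 0 \<and> (\<integral>\<^sup>+ \<omega>. ennreal (\<Phi> (\<zeta> \<omega> / k)) \<partial>M) \<le> 1})"

definition separable_field :: "'b measure \<Rightarrow> 'a::metric_space set \<Rightarrow> ('a \<Rightarrow> 'b \<Rightarrow> real) \<Rightarrow> bool" where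
  "separable_field M X \<xi> \<longleftrightarrow>
     (\<exists>S N. countable S \<and> S \<subseteq> X \<and> N \<in> null_sets M \<and>
        (\<forall>\<omega> \<in> space M - N. \<forall>x \<in> X. \<exists>s. (\<forall>n. s n \<in> S) \<and> s \<longlonglongrightarrow> x \<and>
              (\<lambda>n. \<xi> (s n) \<omega>) \<longlonglongrightarrow> \<xi> x \<omega>))"

end

theory Submission
  imports Defs
begin

text \<open>For every \<open>\<omega>\<close> the oscillation of \<open>\<xi>(\<cdot>, \<omega>)\<close> over pairs of points of a countable dense
  set \<open>S\<close> at distance \<open>< 2r\<close> bounds \<open>\<Delta>(\<xi>, r)\<close>; by uniform continuity it tends to \<open>0\<close> as
  \<open>r \<rightarrow> 0\<close>, and it is dominated by \<open>2 sup |\<xi>|\<close>, whose Orlicz modular is finite at every scale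
  by the \<open>\<Delta>\<^sub>2\<close> condition. Monotone convergence therefore yields radii \<open>\<rho>\<^sub>n \<rightarrow> 0\<close> with
  \<open>E \<Phi>(2\<^sup>n\<^sup>+\<^sup>1 W\<^sub>\<rho>\<^sub>n) \<le> 2\<^sup>-\<^sup>n\<^sup>-\<^sup>1\<close>, so that \<open>T = max(1, 2 sup |\<xi>|, sup\<^sub>n 2\<^sup>n\<^sup>+\<^sup>1 W\<^sub>\<rho>\<^sub>n)\<close> has
  finite modular. A continuous strictly increasing \<open>g\<close> with \<open>g(\<delta>) \<ge> 2\<^sup>-\<^sup>j\<^sup>-\<^sup>1\<close> for \<open>\<delta> \<le> \<rho>\<^sub>j\<close>
  and \<open>g(\<delta>) \<ge> 1\<close> beyond \<open>\<rho>\<^sub>0\<close> then gives \<open>\<Delta>(\<xi>, \<delta>) \<le> T g(\<delta>)\<close>, and \<open>\<tau>\<^sub>0\<close> is \<open>T\<close>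
  divided by its Luxemburg norm.\<close>

section \<open>Orlicz functions\<close>

lemma orlicz_function_nonneg: "orlicz_function \<Phi> \<Longrightarrow> 0 \<le> \<Phi> u"
  unfolding orlicz_function_def by (elim conjE) simp

lemma orlicz_function_zero: "orlicz_function \<Phi> \<Longrightarrow> \<Phi> 0 = 0"
  unfolding orlicz_function_def by (elim conjE) assumption

lemma orlicz_function_continuous: "orlicz_function \<Phi> \<Longrightarrow> continuous_on UNIV \<Phi>"
  unfolding orlicz_function_def by (elim conjE) assumption

lemma borel_measurable_orlicz_function:
  "orlicz_function \<Phi> \<Longrightarrow> f \<in> borel_measurable M \<Longrightarrow> (\<lambda>x. \<Phi> (f x)) \<in> borel_measurable M"
  by (rule borel_measurable_continuous_on[OF orlicz_function_continuous])

lemma orlicz_function_less: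
  assumes "orlicz_function \<Phi>" "0 \<le> a" "a < b" shows "\<Phi> a < \<Phi> b"
proof -
  have "strict_mono_on {0..} \<Phi>" using assms(1) unfolding orlicz_function_def by (elim conjE) assumption
  then show ?thesis by (rule strict_mono_onD) (use assms(2,3) in auto)
qed

lemma orlicz_function_mono:
  assumes "orlicz_function \<Phi>" "0 \<le> a" "a \<le> b" shows "\<Phi> a \<le> \<Phi> b"
  using orlicz_function_less[OF assms(1,2)] assms(3) by (cases "a = b") (auto intro: less_imp_le)

lemma orlicz_function_pos: "orlicz_function \<Phi> \<Longrightarrow> 0 < u \<Longrightarrow> 0 < \<Phi> u"
  using orlicz_function_less[of \<Phi> 0 u] orlicz_function_zero[of \<Phi>] by auto

lemma orlicz_function_abs:
  assumes "orlicz_function \<Phi>" shows "\<Phi> \<bar>u\<bar> = \<Phi> u"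
proof -
  have "\<Phi> (- u) = \<Phi> u" using assms unfolding orlicz_function_def by (elim conjE) simp
  then show ?thesis by (cases "0 \<le> u") simp_all
qed

lemma orlicz_function_abs_mono:
  assumes "orlicz_function \<Phi>" "\<bar>a\<bar> \<le> \<bar>b\<bar>" shows "\<Phi> a \<le> \<Phi> b"
  using orlicz_function_mono[OF assms(1) abs_ge_zero assms(2)] by (simp add: orlicz_function_abs[OF assms(1)])

lemma orlicz_function_scale_le:
  assumes "orlicz_function \<Phi>" "0 \<le> t" "t \<le> 1" shows "\<Phi> (t * x) \<le> t * \<Phi> x"
proof -
  have "convex_on UNIV \<Phi>" using assms(1) unfolding orlicz_function_def by (elim conjE) assumption
  then have "\<Phi> ((1 - t) *\<^sub>R 0 + t *\<^sub>R x) \<le> (1 - t) * \<Phi> 0 + t * \<Phi> x"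
    by (rule convex_onD) (use assms in auto)
  then show ?thesis using orlicz_function_zero[OF assms(1)] by simp
qed

lemma orlicz_function_max_le:
  assumes "orlicz_function \<Phi>" shows "\<Phi> (max x y) \<le> \<Phi> x + \<Phi> y"
  using orlicz_function_nonneg[OF assms, of x] orlicz_function_nonneg[OF assms, of y]
  by (cases "x \<le> y") (simp_all add: max_def)

lemma orlicz_function_eventually_gt:
  assumes "orlicz_function \<Phi>" shows "eventually (\<lambda>u. c < \<Phi> u) at_top"
proof -
  have "filterlim \<Phi> at_top at_top" using assms unfolding orlicz_function_def by (elim conjE) assumption
  then show ?thesis by (simp add: filterlim_at_top_dense)
qed

lemma orlicz_function_SUP_le:
  assumes \<Phi>: "orlicz_function \<Phi>" and "\<And>n. 0 \<le> a n" and le: "\<And>n. \<Phi> (a n) \<le> c"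
  shows "bdd_above (range a)" and "\<Phi> (SUP n. a n) \<le> c"
proof -
  obtain U where U: "\<And>u. U \<le> u \<Longrightarrow> c < \<Phi> u"
    using orlicz_function_eventually_gt[OF \<Phi>, of c] by (auto simp: eventually_at_top_linorder)
  have "a n \<le> U" for n
    using U[of "a n"] le[of n] by linarith
  then show bdd: "bdd_above (range a)" by (meson bdd_aboveI2)
  \<comment> \<open>\<open>\<Phi>\<close> is monotone only on \<open>[0, \<infinity>)\<close>; composed with \<open>max 0\<close> it commutes with suprema.\<close>
  define f where "f u = \<Phi> (max 0 u)" for u
  have "continuous_on UNIV f"
    unfolding f_def
    by (rule continuous_on_compose2[OF orlicz_function_continuous[OF \<Phi>]
          continuous_on_max[OF continuous_on_const continuous_on_id]]) simp
  then have "isCont f (SUP n. a n)" by (simp add: continuous_on_eq_continuous_at)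
  then have cont: "continuous (at_left (SUP n. a n)) f" by (rule continuous_at_imp_continuous_at_within)
  have mono: "mono f"
    unfolding f_def mono_def by (auto intro: orlicz_function_mono[OF \<Phi>])
  have "f (SUP n. a n) = (SUP n. f (a n))"
    using continuous_at_Sup_mono[OF mono cont _ bdd] by (simp add: image_image)
  also have "\<dots> \<le> c"
    using le assms(2) by (intro cSUP_least) (auto simp: f_def)
  finally have "f (SUP n. a n) \<le> c" .
  moreover have "0 \<le> (SUP n. a n)"
    using assms(2) cSUP_upper[OF UNIV_I bdd] by (blast intro: order_trans)
  ultimately show "\<Phi> (SUP n. a n) \<le> c" by (simp add: f_def)
qed

lemma delta2_iterate:
  assumes \<Phi>: "orlicz_function \<Phi>" and "delta2 \<Phi>"
  obtains A K where "\<And>u. 0 \<le> u \<Longrightarrow> \<Phi> (2 ^ m * u) \<le> A * \<Phi> u + K"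
proof -
  have "Limsup at_top (\<lambda>u. ereal (\<Phi> (2 * u) / \<Phi> u)) \<noteq> \<infinity>"
    using assms(2) unfolding delta2_def by simp
  then obtain n :: nat where "Limsup at_top (\<lambda>u. ereal (\<Phi> (2 * u) / \<Phi> u)) < ereal (real n)"
    unfolding less_PInf_Ex_of_nat by blast
  from Limsup_lessD[OF this] obtain U where U: "\<And>u. U \<le> u \<Longrightarrow> \<Phi> (2 * u) / \<Phi> u < real n"
    by (auto simp: eventually_at_top_linorder)
  define V where "V = max U 1"
  have doubling: "\<Phi> (2 * u) \<le> real n * \<Phi> u + \<Phi> (2 * V)" if "0 \<le> u" for u
  proof (cases "V \<le> u")
    case True
    then have "\<Phi> (2 * u) \<le> real n * \<Phi> u"
      using U[of u] orlicz_function_pos[OF \<Phi>, of u] by (simp add: V_def divide_less_eq)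
    then show ?thesis using orlicz_function_nonneg[OF \<Phi>, of "2 * V"] by linarith
  next
    case False
    then have "\<Phi> (2 * u) \<le> \<Phi> (2 * V)" using that by (intro orlicz_function_mono[OF \<Phi>]) auto
    then show ?thesis using orlicz_function_nonneg[OF \<Phi>, of u] by (simp add: add_increasing)
  qed
  have "\<exists>A K. \<forall>u\<ge>0. \<Phi> (2 ^ m * u) \<le> A * \<Phi> u + K"
  proof (induction m)
    case 0
    show ?case by (intro exI[of _ 1] exI[of _ 0]) simp
  next
    case (Suc m)
    then obtain A K where AK: "\<And>u. 0 \<le> u \<Longrightarrow> \<Phi> (2 ^ m * u) \<le> A * \<Phi> u + K" by blast
    have "\<Phi> (2 ^ Suc m * u) \<le> (real n * A) * \<Phi> u + (real n * K + \<Phi> (2 * V))" if "0 \<le> u" for u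
    proof -
      have "\<Phi> (2 ^ Suc m * u) \<le> real n * \<Phi> (2 ^ m * u) + \<Phi> (2 * V)"
        using doubling[of "2 ^ m * u"] that by (simp add: mult.assoc)
      also have "\<dots> \<le> real n * (A * \<Phi> u + K) + \<Phi> (2 * V)"
        using AK[OF that] by (intro add_right_mono mult_left_mono) auto
      finally show ?thesis by (simp add: algebra_simps)
    qed
    then show ?case by blast
  qed
  then show ?thesis using that by blast
qed

section \<open>Orlicz modular and Luxemburg norm\<close>

abbreviation orlicz_modular :: "'b measure \<Rightarrow> (real \<Rightarrow> real) \<Rightarrow> ('b \<Rightarrow> real) \<Rightarrow> ennreal" where
  "orlicz_modular M \<Phi> f \<equiv> \<integral>\<^sup>+ \<omega>. ennreal (\<Phi> (f \<omega>)) \<partial>M"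

lemma orlicz_modular_mono:
  assumes "orlicz_function \<Phi>" "\<And>\<omega>. \<omega> \<in> space M \<Longrightarrow> \<bar>f \<omega>\<bar> \<le> \<bar>g \<omega>\<bar>"
  shows "orlicz_modular M \<Phi> f \<le> orlicz_modular M \<Phi> g"
proof (rule nn_integral_mono)
  fix \<omega> assume "\<omega> \<in> space M"
  then show "ennreal (\<Phi> (f \<omega>)) \<le> ennreal (\<Phi> (g \<omega>))"
    by (intro ennreal_leI orlicz_function_abs_mono[OF assms(1) assms(2)])
qed

lemma orlicz_modular_max_less_top:
  assumes "finite_measure M" "orlicz_function \<Phi>"
    and "f \<in> borel_measurable M" "orlicz_modular M \<Phi> f < \<infinity>"
    and "g \<in> borel_measurable M" "orlicz_modular M \<Phi> g < \<infinity>"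
  shows "orlicz_modular M \<Phi> (\<lambda>\<omega>. max (f \<omega>) (g \<omega>)) < \<infinity>"
proof -
  have [measurable]: "(\<lambda>\<omega>. \<Phi> (f \<omega>)) \<in> borel_measurable M" "(\<lambda>\<omega>. \<Phi> (g \<omega>)) \<in> borel_measurable M"
    using assms(2,3,5) by (simp_all add: borel_measurable_orlicz_function)
  have "orlicz_modular M \<Phi> (\<lambda>\<omega>. max (f \<omega>) (g \<omega>)) \<le> (\<integral>\<^sup>+ \<omega>. ennreal (\<Phi> (f \<omega>)) + ennreal (\<Phi> (g \<omega>)) \<partial>M)"
  proof (rule nn_integral_mono)
    fix \<omega>
    have "ennreal (\<Phi> (max (f \<omega>) (g \<omega>))) \<le> ennreal (\<Phi> (f \<omega>) + \<Phi> (g \<omega>))"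
      by (rule ennreal_leI) (rule orlicz_function_max_le[OF assms(2)])
    then show "ennreal (\<Phi> (max (f \<omega>) (g \<omega>))) \<le> ennreal (\<Phi> (f \<omega>)) + ennreal (\<Phi> (g \<omega>))"
      by (simp add: ennreal_plus orlicz_function_nonneg[OF assms(2)])
  qed
  also have "\<dots> = orlicz_modular M \<Phi> f + orlicz_modular M \<Phi> g"
    by (rule nn_integral_add) measurable
  also have "\<dots> < \<infinity>"
    using assms(4,6) by (simp add: less_top[symmetric])
  finally show ?thesis .
qed

lemma orlicz_norm_mono:
  assumes "orlicz_function \<Phi>" "\<And>\<omega>. \<omega> \<in> space M \<Longrightarrow> \<bar>f \<omega>\<bar> \<le> \<bar>g \<omega>\<bar>"
  shows "orlicz_norm M \<Phi> f \<le> orlicz_norm M \<Phi> g"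
  unfolding orlicz_norm_def
proof (intro Inf_superset_mono image_mono subsetI)
  fix k assume "k \<in> {k. k > 0 \<and> orlicz_modular M \<Phi> (\<lambda>\<omega>. g \<omega> / k) \<le> 1}"
  then have k: "0 < k" "orlicz_modular M \<Phi> (\<lambda>\<omega>. g \<omega> / k) \<le> 1" by auto
  have "orlicz_modular M \<Phi> (\<lambda>\<omega>. f \<omega> / k) \<le> orlicz_modular M \<Phi> (\<lambda>\<omega>. g \<omega> / k)"
    using k(1) assms by (intro orlicz_modular_mono) (auto simp: abs_divide divide_right_mono)
  with k show "k \<in> {k. k > 0 \<and> orlicz_modular M \<Phi> (\<lambda>\<omega>. f \<omega> / k) \<le> 1}" by auto
qed

lemma orlicz_norm_divide:
  assumes "0 < c"
  shows "orlicz_norm M \<Phi> (\<lambda>\<omega>. f \<omega> / c) = ereal (1 / c) * orlicz_norm M \<Phi> f"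
proof -
  define A where "A = {k. k > 0 \<and> orlicz_modular M \<Phi> (\<lambda>\<omega>. f \<omega> / k) \<le> 1}"
  have "{k. k > 0 \<and> orlicz_modular M \<Phi> (\<lambda>\<omega>. f \<omega> / c / k) \<le> 1} = (\<lambda>k. k / c) ` A"
  proof (intro equalityI subsetI)
    fix k assume "k \<in> {k. k > 0 \<and> orlicz_modular M \<Phi> (\<lambda>\<omega>. f \<omega> / c / k) \<le> 1}"
    then have "c * k \<in> A" using assms by (auto simp: A_def divide_divide_eq_left mult.commute)
    then show "k \<in> (\<lambda>k. k / c) ` A" using assms by (auto intro!: image_eqI[of _ _ "c * k"])
  next
    fix k assume "k \<in> (\<lambda>k. k / c) ` A"
    then obtain j where "j \<in> A" "k = j / c" by blast
    then show "k \<in> {k. k > 0 \<and> orlicz_modular M \<Phi> (\<lambda>\<omega>. f \<omega> / c / k) \<le> 1}"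
      using assms by (auto simp: A_def)
  qed
  then have "orlicz_norm M \<Phi> (\<lambda>\<omega>. f \<omega> / c) = Inf ((\<lambda>x. ereal (1 / c) * x) ` ereal ` A)"
    unfolding orlicz_norm_def by (simp add: image_image divide_inverse mult.commute)
  also have "\<dots> = ereal (1 / c) * Inf (ereal ` A)"
    using ereal_Inf_cmult[of "1 / c" "\<lambda>x. x \<in> ereal ` A"] assms by (simp add: setcompr_eq_image)
  finally show ?thesis unfolding orlicz_norm_def A_def .
qed

lemma orlicz_norm_finiteE:
  assumes "orlicz_norm M \<Phi> f < \<infinity>"
  obtains k where "0 < k" "orlicz_modular M \<Phi> (\<lambda>\<omega>. f \<omega> / k) \<le> 1"
proof -
  have "{k. k > 0 \<and> orlicz_modular M \<Phi> (\<lambda>\<omega>. f \<omega> / k) \<le> 1} \<noteq> {}"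
  proof
    assume "{k. k > 0 \<and> orlicz_modular M \<Phi> (\<lambda>\<omega>. f \<omega> / k) \<le> 1} = {}"
    then have "orlicz_norm M \<Phi> f = \<infinity>"
      unfolding orlicz_norm_def by (simp only: image_empty Inf_empty top_ereal_def)
    with assms show False by simp
  qed
  then show ?thesis using that by blast
qed

lemma orlicz_modular_finite_if_delta2:
  assumes "finite_measure M" and \<Phi>: "orlicz_function \<Phi>" and "delta2 \<Phi>"
    and f: "f \<in> borel_measurable M" "orlicz_norm M \<Phi> f < \<infinity>"
  shows "orlicz_modular M \<Phi> (\<lambda>\<omega>. c * f \<omega>) < \<infinity>"
proof -
  interpret finite_measure M by fact
  obtain k where k: "0 < k" "orlicz_modular M \<Phi> (\<lambda>\<omega>. f \<omega> / k) \<le> 1"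
    using f(2) by (rule orlicz_norm_finiteE)
  obtain m :: nat where m: "\<bar>c\<bar> * k < 2 ^ m"
    using real_arch_pow[of 2 "\<bar>c\<bar> * k"] by auto
  obtain A K where AK: "\<And>u. 0 \<le> u \<Longrightarrow> \<Phi> (2 ^ m * u) \<le> A * \<Phi> u + K"
    using delta2_iterate[OF \<Phi> assms(3)] by blast
  have pointwise: "ennreal (\<Phi> (c * f \<omega>)) \<le> ennreal \<bar>A\<bar> * ennreal (\<Phi> (f \<omega> / k)) + ennreal \<bar>K\<bar>" for \<omega>
  proof -
    have "\<bar>c * f \<omega>\<bar> = (\<bar>c\<bar> * k) * \<bar>f \<omega> / k\<bar>"
      using k(1) by (simp add: abs_mult abs_divide)
    also have "\<dots> \<le> 2 ^ m * \<bar>f \<omega> / k\<bar>"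
      using m by (intro mult_right_mono) auto
    also have "\<dots> = \<bar>2 ^ m * \<bar>f \<omega> / k\<bar>\<bar>"
      by (simp add: abs_mult)
    finally have "\<Phi> (c * f \<omega>) \<le> \<Phi> (2 ^ m * \<bar>f \<omega> / k\<bar>)"
      by (rule orlicz_function_abs_mono[OF \<Phi>])
    also have "\<dots> \<le> A * \<Phi> \<bar>f \<omega> / k\<bar> + K"
      by (rule AK) simp
    also have "\<dots> \<le> \<bar>A\<bar> * \<Phi> (f \<omega> / k) + \<bar>K\<bar>"
      unfolding orlicz_function_abs[OF \<Phi>]
      by (intro add_mono mult_right_mono abs_ge_self orlicz_function_nonneg[OF \<Phi>])
    finally have "ennreal (\<Phi> (c * f \<omega>)) \<le> ennreal (\<bar>A\<bar> * \<Phi> (f \<omega> / k) + \<bar>K\<bar>)"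
      by (rule ennreal_leI)
    also have "\<dots> = ennreal (\<bar>A\<bar> * \<Phi> (f \<omega> / k)) + ennreal \<bar>K\<bar>"
      by (rule ennreal_plus) (simp_all add: orlicz_function_nonneg[OF \<Phi>])
    also have "\<dots> = ennreal \<bar>A\<bar> * ennreal (\<Phi> (f \<omega> / k)) + ennreal \<bar>K\<bar>"
      by (subst ennreal_mult) (simp_all add: orlicz_function_nonneg[OF \<Phi>])
    finally show ?thesis .
  qed
  have [measurable]: "(\<lambda>\<omega>. \<Phi> (f \<omega> / k)) \<in> borel_measurable M"
    using f(1) by (simp add: borel_measurable_orlicz_function[OF \<Phi>])
  have "orlicz_modular M \<Phi> (\<lambda>\<omega>. c * f \<omega>)
      \<le> (\<integral>\<^sup>+ \<omega>. ennreal \<bar>A\<bar> * ennreal (\<Phi> (f \<omega> / k)) + ennreal \<bar>K\<bar> \<partial>M)"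
    by (intro nn_integral_mono pointwise)
  also have "\<dots> = ennreal \<bar>A\<bar> * orlicz_modular M \<Phi> (\<lambda>\<omega>. f \<omega> / k) + ennreal \<bar>K\<bar> * emeasure M (space M)"
    by (subst nn_integral_add) (auto simp: nn_integral_cmult)
  also have "\<dots> < \<infinity>"
    using k(2) emeasure_finite[of "space M"]
    by (auto simp: less_top[symmetric] ennreal_mult_eq_top_iff top_unique)
  finally show ?thesis .
qed

lemma orlicz_norm_le_max_modular:
  assumes \<Phi>: "orlicz_function \<Phi>"
    and f: "f \<in> borel_measurable M" and fin: "orlicz_modular M \<Phi> f < \<infinity>"
  shows "orlicz_norm M \<Phi> f \<le> ereal (max 1 (enn2real (orlicz_modular M \<Phi> f)))"
  unfolding orlicz_norm_def
proof (rule Inf_lower, rule imageI, safe)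
  define c where "c = max 1 (enn2real (orlicz_modular M \<Phi> f))"
  have c: "1 \<le> c" unfolding c_def by simp
  show "0 < c" using c by simp
  have "orlicz_modular M \<Phi> (\<lambda>\<omega>. f \<omega> / c) \<le> (\<integral>\<^sup>+ \<omega>. ennreal (1 / c) * ennreal (\<Phi> (f \<omega>)) \<partial>M)"
  proof (rule nn_integral_mono)
    fix \<omega>
    have "\<Phi> (f \<omega> / c) \<le> 1 / c * \<Phi> (f \<omega>)"
      using orlicz_function_scale_le[OF \<Phi>, of "1 / c" "f \<omega>"] c by simp
    then have "ennreal (\<Phi> (f \<omega> / c)) \<le> ennreal (1 / c * \<Phi> (f \<omega>))"
      by (rule ennreal_leI)
    also have "\<dots> = ennreal (1 / c) * ennreal (\<Phi> (f \<omega>))"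
      by (rule ennreal_mult) (use c orlicz_function_nonneg[OF \<Phi>] in auto)
    finally show "ennreal (\<Phi> (f \<omega> / c)) \<le> ennreal (1 / c) * ennreal (\<Phi> (f \<omega>))" .
  qed
  also have "\<dots> = ennreal (1 / c) * orlicz_modular M \<Phi> f"
    using borel_measurable_orlicz_function[OF \<Phi> f] by (intro nn_integral_cmult) measurable
  also have "\<dots> = ennreal (1 / c) * ennreal (enn2real (orlicz_modular M \<Phi> f))"
    using fin by (simp add: less_top)
  also have "\<dots> = ennreal (1 / c * enn2real (orlicz_modular M \<Phi> f))"
    by (rule ennreal_mult[symmetric]) (use c in auto)
  also have "\<dots> \<le> 1"
    using c unfolding c_def by (simp add: field_simps ennreal_le_1)
  finally show "orlicz_modular M \<Phi> (\<lambda>\<omega>. f \<omega> / c) \<le> 1" .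
qed

lemma orlicz_norm_pos:
  assumes "prob_space M" and \<Phi>: "orlicz_function \<Phi>" and ge: "\<And>\<omega>. \<omega> \<in> space M \<Longrightarrow> 1 \<le> \<bar>f \<omega>\<bar>"
  shows "0 < orlicz_norm M \<Phi> f"
proof -
  interpret prob_space M by fact
  obtain U where U: "\<And>u. U \<le> u \<Longrightarrow> 1 < \<Phi> u"
    using orlicz_function_eventually_gt[OF \<Phi>, of 1] by (auto simp: eventually_at_top_linorder)
  define m where "m = max 1 U"
  have m: "0 < m" "U \<le> m" by (simp_all add: m_def)
  have "1 / m \<le> k" if "0 < k" and k: "orlicz_modular M \<Phi> (\<lambda>\<omega>. f \<omega> / k) \<le> 1" for k
  proof (rule ccontr)
    assume "\<not> 1 / m \<le> k"
    then have "k * m < 1" using m(1) by (simp add: pos_less_divide_eq not_le)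
    then have "m < 1 / k" using \<open>0 < k\<close> by (simp add: pos_less_divide_eq mult.commute)
    then have "1 < \<Phi> (1 / k)" using m(2) by (intro U) simp
    have "orlicz_modular M \<Phi> (\<lambda>_. 1 / k) \<le> orlicz_modular M \<Phi> (\<lambda>\<omega>. f \<omega> / k)"
      using ge \<open>0 < k\<close> by (intro orlicz_modular_mono[OF \<Phi>]) (simp add: abs_divide divide_right_mono)
    then have "orlicz_modular M \<Phi> (\<lambda>_. 1 / k) \<le> 1"
      using k by (rule order_trans)
    then have "\<Phi> (1 / k) \<le> 1" by (simp add: emeasure_space_1)
    with \<open>1 < \<Phi> (1 / k)\<close> show False by simp
  qed
  then have "ereal (1 / m) \<le> orlicz_norm M \<Phi> f"
    unfolding orlicz_norm_def by (intro Inf_greatest) auto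
  moreover have "0 < ereal (1 / m)" using m(1) by simp
  ultimately show ?thesis by (rule less_le_trans[rotated])
qed

lemma orlicz_norm_normalize:
  assumes "prob_space M" and \<Phi>: "orlicz_function \<Phi>"
    and f: "f \<in> borel_measurable M" "\<And>\<omega>. \<omega> \<in> space M \<Longrightarrow> 1 \<le> \<bar>f \<omega>\<bar>" "orlicz_modular M \<Phi> f < \<infinity>"
  obtains c where "0 < c" "orlicz_norm M \<Phi> (\<lambda>\<omega>. f \<omega> / c) = 1"
proof -
  have "orlicz_norm M \<Phi> f < \<infinity>"
    using orlicz_norm_le_max_modular[OF \<Phi> f(1,3)] by (rule le_less_trans) (simp add: max_def)
  moreover have "0 < orlicz_norm M \<Phi> f"
    by (rule orlicz_norm_pos[OF assms(1) \<Phi> f(2)])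
  ultimately obtain c where c: "orlicz_norm M \<Phi> f = ereal c" "0 < c"
    by (cases "orlicz_norm M \<Phi> f") auto
  then have "orlicz_norm M \<Phi> (\<lambda>\<omega>. f \<omega> / c) = 1"
    unfolding orlicz_norm_divide[OF c(2)] c(1) using c(2) by simp
  with c(2) show ?thesis by (rule that)
qed

lemma orlicz_modular_decseq_tendsto_zero:
  assumes \<Phi>: "orlicz_function \<Phi>" and meas: "\<And>m. f m \<in> borel_measurable M"
    and dec: "\<And>m \<omega>. \<omega> \<in> space M \<Longrightarrow> \<bar>f (Suc m) \<omega>\<bar> \<le> \<bar>f m \<omega>\<bar>"
    and lim: "\<And>\<omega>. \<omega> \<in> space M \<Longrightarrow> (\<lambda>m. f m \<omega>) \<longlonglongrightarrow> 0"
    and fin: "orlicz_modular M \<Phi> (f 0) < \<infinity>"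
  shows "(\<lambda>m. orlicz_modular M \<Phi> (f m)) \<longlonglongrightarrow> 0"
proof -
  define F where "F m \<omega> = ennreal (\<Phi> (f m \<omega>))" for m \<omega>
  have [measurable]: "(\<lambda>\<omega>. \<Phi> (f m \<omega>)) \<in> borel_measurable M" for m
    by (rule borel_measurable_orlicz_function[OF \<Phi> meas])
  have F_meas: "F m \<in> borel_measurable M" for m
    unfolding F_def by measurable
  have F_dec: "F (Suc m) \<omega> \<le> F m \<omega>" if "\<omega> \<in> space M" for m \<omega>
    unfolding F_def by (intro ennreal_leI orlicz_function_abs_mono[OF \<Phi> dec[OF that]])
  have F_INF: "(INF m. F m \<omega>) = 0" if "\<omega> \<in> space M" for \<omega>
  proof -
    have "(\<lambda>m. F m \<omega>) \<longlonglongrightarrow> (INF m. F m \<omega>)"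
      using F_dec[OF that] by (intro LIMSEQ_INF decseq_SucI)
    moreover have "(\<lambda>m. F m \<omega>) \<longlonglongrightarrow> ennreal (\<Phi> 0)"
      unfolding F_def
      by (intro tendsto_ennrealI continuous_on_tendsto_compose[OF orlicz_function_continuous[OF \<Phi>] lim[OF that]]) auto
    ultimately show ?thesis
      using LIMSEQ_unique orlicz_function_zero[OF \<Phi>] by fastforce
  qed
  have "(INF m. integral\<^sup>N M (F m)) = (\<integral>\<^sup>+ \<omega>. (INF m. F m \<omega>) \<partial>M)"
    using fin F_meas F_dec
    by (intro nn_integral_monotone_convergence_INF_AE'[symmetric]) (auto simp: F_def intro!: AE_I2)
  also have "\<dots> = (\<integral>\<^sup>+ \<omega>. 0 \<partial>M)"
    by (intro nn_integral_cong F_INF)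
  finally have "(INF m. integral\<^sup>N M (F m)) = 0" by simp
  moreover have "decseq (\<lambda>m. integral\<^sup>N M (F m))"
    using F_dec by (intro decseq_SucI nn_integral_mono) auto
  ultimately have "(\<lambda>m. integral\<^sup>N M (F m)) \<longlonglongrightarrow> 0"
    using LIMSEQ_INF by metis
  then show ?thesis unfolding F_def .
qed

lemma orlicz_modular_summable_dominated:
  assumes \<Phi>: "orlicz_function \<Phi>" and meas: "\<And>n. a n \<in> borel_measurable M"
    and nonneg: "\<And>n \<omega>. \<omega> \<in> space M \<Longrightarrow> 0 \<le> a n \<omega>"
    and summable: "(\<Sum>n. orlicz_modular M \<Phi> (a n)) < \<infinity>"
  obtains B where "B \<in> borel_measurable M" "orlicz_modular M \<Phi> B < \<infinity>"
    "AE \<omega> in M. \<forall>n. a n \<omega> \<le> B \<omega>"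
proof -
  define S where "S \<omega> = (\<Sum>n. ennreal (\<Phi> (a n \<omega>)))" for \<omega>
  note meas [measurable]
  have [measurable]: "(\<lambda>\<omega>. \<Phi> (a n \<omega>)) \<in> borel_measurable M" for n
    by (rule borel_measurable_orlicz_function[OF \<Phi> meas])
  have S_meas [measurable]: "S \<in> borel_measurable M"
    unfolding S_def by (intro borel_measurable_suminf_order) measurable
  have S_int: "(\<integral>\<^sup>+ \<omega>. S \<omega> \<partial>M) = (\<Sum>n. orlicz_modular M \<Phi> (a n))"
    unfolding S_def by (rule nn_integral_suminf) measurable
  \<comment> \<open>Cut off on the null set where the sum diverges, so that the supremum is finite everywhere.\<close>
  define b where "b n \<omega> = (if S \<omega> < \<infinity> then a n \<omega> else 0)" for n \<omega>
  define B where "B \<omega> = (SUP n. b n \<omega>)" for \<omega>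
  have b_le: "\<Phi> (b n \<omega>) \<le> enn2real (S \<omega>)" for n \<omega>
  proof (cases "S \<omega> < \<infinity>")
    case True
    then obtain s where s: "S \<omega> = ennreal s" "0 \<le> s"
      by (cases "S \<omega>" rule: ennreal_cases) auto
    have "(\<Sum>i\<in>{n}. ennreal (\<Phi> (a i \<omega>))) \<le> S \<omega>"
      unfolding S_def by (rule sum_le_suminf[OF summableI]) simp_all
    then show ?thesis
      using True s orlicz_function_nonneg[OF \<Phi>] by (simp add: b_def ennreal_le_iff)
  qed (simp add: b_def orlicz_function_zero[OF \<Phi>])
  have b_nonneg: "0 \<le> b n \<omega>" if "\<omega> \<in> space M" for n \<omega>
    using nonneg[OF that] by (simp add: b_def)
  have b_bdd: "bdd_above (range (\<lambda>n. b n \<omega>))" and B_le: "\<Phi> (B \<omega>) \<le> enn2real (S \<omega>)"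
    if "\<omega> \<in> space M" for \<omega>
    using orlicz_function_SUP_le[OF \<Phi> b_nonneg[OF that] b_le] by (simp_all add: B_def)
  have b_meas: "b n \<in> borel_measurable M" for n
    unfolding b_def by measurable
  have "B \<in> borel_measurable M"
    unfolding B_def by (rule borel_measurable_cSUP) (auto simp: b_meas b_bdd)
  moreover have "orlicz_modular M \<Phi> B \<le> (\<integral>\<^sup>+ \<omega>. S \<omega> \<partial>M)"
  proof (rule nn_integral_mono)
    fix \<omega> assume "\<omega> \<in> space M"
    then have "ennreal (\<Phi> (B \<omega>)) \<le> ennreal (enn2real (S \<omega>))"
      by (intro ennreal_leI B_le)
    also have "\<dots> \<le> S \<omega>"
      by (cases "S \<omega>" rule: ennreal_cases) simp_all
    finally show "ennreal (\<Phi> (B \<omega>)) \<le> S \<omega>" .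
  qed
  then have "orlicz_modular M \<Phi> B < \<infinity>"
    using S_int summable by simp
  moreover have "AE \<omega> in M. S \<omega> \<noteq> \<infinity>"
    using S_int summable by (intro nn_integral_PInf_AE) auto
  then have "AE \<omega> in M. \<forall>n. a n \<omega> \<le> B \<omega>"
    using AE_space
  proof eventually_elim
    case (elim \<omega>)
    show ?case
    proof
      fix n
      have "b n \<omega> \<le> B \<omega>"
        unfolding B_def by (rule cSUP_upper[OF UNIV_I b_bdd[OF elim(2)]])
      then show "a n \<omega> \<le> B \<omega>"
        using elim(1) by (simp add: b_def less_top)
    qed
  qed
  ultimately show ?thesis by (rule that)
qed

section \<open>A majorant for vanishing families of random variables\<close>

lemma continuous_on_suminf_dominated:
  fixes f :: "nat \<Rightarrow> 'a::topological_space \<Rightarrow> 'b::banach"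
  assumes "\<And>n. continuous_on S (f n)" and "\<And>n x. x \<in> S \<Longrightarrow> norm (f n x) \<le> c n" and "summable c"
  shows "continuous_on S (\<lambda>x. \<Sum>n. f n x)"
proof -
  have "uniform_limit S (\<lambda>n x. \<Sum>i<n. f i x) (\<lambda>x. \<Sum>n. f n x) sequentially"
    by (rule Weierstrass_m_test[OF _ assms(3)]) (use assms(2) in auto)
  then show ?thesis
    by (rule uniform_limit_theorem[rotated]) (auto intro!: always_eventually continuous_on_sum assms(1))
qed

text \<open>The \<open>n\<close>-th summand of \<open>g\<close> reaches its full height \<open>2\<^sup>-\<^sup>n\<close> once \<open>\<delta> > \<rho> n\<close>; the
  linear summand \<open>\<delta>\<close> makes \<open>g\<close> strictly increasing.\<close>
lemma staircase_majorant:
  fixes \<rho> :: "nat \<Rightarrow> real"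
  assumes pos: "\<And>n. 0 < \<rho> n" and lim: "\<rho> \<longlonglongrightarrow> 0"
  obtains g :: "real \<Rightarrow> real" where "continuous_on UNIV g" "strict_mono_on {0..} g" "g 0 = 0"
    "\<forall>\<delta>>0. 1 \<le> g \<delta> \<or> (\<exists>j. \<delta> \<le> \<rho> j \<and> (1 / 2) ^ Suc j \<le> g \<delta>)"
proof -
  define f where "f n \<delta> = (1 / 2 :: real) ^ n * min 1 (max 0 (\<delta> / \<rho> n))" for n \<delta>
  define g where "g \<delta> = \<delta> + (\<Sum>n. f n \<delta>)" for \<delta>
  have f_nonneg: "0 \<le> f n \<delta>" for n \<delta>
    unfolding f_def by simp
  have f_bound: "norm (f n \<delta>) \<le> (1 / 2) ^ n" for n \<delta>
    unfolding f_def by (auto simp: abs_mult)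
  have geometric: "summable (\<lambda>n. (1 / 2 :: real) ^ n)"
    by simp
  have summable: "summable (\<lambda>n. f n \<delta>)" for \<delta>
    by (rule summable_comparison_test'[OF geometric, of 0]) (use f_bound in auto)
  have f_term: "f n \<delta> \<le> (\<Sum>n. f n \<delta>)" for n \<delta>
    using sum_le_suminf[OF summable, of "{n}"] f_nonneg by simp
  have "continuous_on UNIV (\<lambda>\<delta>. \<Sum>n. f n \<delta>)"
  proof (rule continuous_on_suminf_dominated[OF _ _ geometric])
    show "continuous_on UNIV (f n)" for n
      unfolding f_def using pos[of n] by (intro continuous_intros) auto
    show "norm (f n \<delta>) \<le> (1 / 2) ^ n" for n \<delta>
      by (rule f_bound)
  qed
  then have "continuous_on UNIV g"
    unfolding g_def by (intro continuous_intros)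
  moreover have "strict_mono_on {0..} g"
  proof (rule strict_mono_onI)
    fix a b :: real assume "a < b"
    then have "f n a \<le> f n b" for n
      using pos[of n] unfolding f_def by (intro mult_left_mono min.mono max.mono divide_right_mono) auto
    then have "(\<Sum>n. f n a) \<le> (\<Sum>n. f n b)"
      by (intro suminf_le summable)
    then show "g a < g b" unfolding g_def using \<open>a < b\<close> by linarith
  qed
  moreover have "g 0 = 0"
    unfolding g_def f_def by simp
  moreover have "1 \<le> g \<delta> \<or> (\<exists>j. \<delta> \<le> \<rho> j \<and> (1 / 2) ^ Suc j \<le> g \<delta>)" if "0 < \<delta>" for \<delta>
  proof -
    have "\<exists>n. \<rho> n < \<delta>"
      using order_tendstoD(2)[OF lim that] by (auto simp: eventually_sequentially)
    define n where "n = (LEAST n. \<rho> n < \<delta>)"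
    have "\<rho> n < \<delta>"
      unfolding n_def using \<open>\<exists>n. \<rho> n < \<delta>\<close> by (rule LeastI_ex)
    then have "f n \<delta> = (1 / 2) ^ n"
      using pos[of n] by (simp add: f_def)
    then have step: "(1 / 2) ^ n \<le> g \<delta>"
      using f_term[of n \<delta>] that by (simp add: g_def)
    show ?thesis
    proof (cases n)
      case 0
      then show ?thesis using step by simp
    next
      case (Suc j)
      then have "\<delta> \<le> \<rho> j"
        using not_less_Least[of j "\<lambda>n. \<rho> n < \<delta>"] by (simp add: n_def)
      then show ?thesis using step Suc by blast
    qed
  qed
  ultimately show ?thesis by (intro that[of g]) auto
qed

text \<open>For a random field, \<open>W r\<close> will be its oscillation over close pairs at scale \<open>2r\<close> and \<open>Y\<close>
  twice its supremum.\<close>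
locale dominated_vanishing_family = prob_space M for M :: "'b measure" +
  fixes \<Phi> :: "real \<Rightarrow> real" and W :: "real \<Rightarrow> 'b \<Rightarrow> real" and Y :: "'b \<Rightarrow> real"
  assumes orlicz: "orlicz_function \<Phi>" and delta2: "delta2 \<Phi>"
    and Y_measurable: "Y \<in> borel_measurable M" and Y_norm: "orlicz_norm M \<Phi> Y < \<infinity>"
    and W_measurable: "\<And>r. 0 < r \<Longrightarrow> W r \<in> borel_measurable M"
    and W_nonneg: "\<And>r \<omega>. 0 < r \<Longrightarrow> \<omega> \<in> space M \<Longrightarrow> 0 \<le> W r \<omega>"
    and W_mono: "\<And>r s \<omega>. 0 < r \<Longrightarrow> r \<le> s \<Longrightarrow> \<omega> \<in> space M \<Longrightarrow> W r \<omega> \<le> W s \<omega>"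
    and W_le_Y: "\<And>r \<omega>. 0 < r \<Longrightarrow> \<omega> \<in> space M \<Longrightarrow> W r \<omega> \<le> Y \<omega>"
    and W_vanishes: "\<And>\<omega>. \<omega> \<in> space M \<Longrightarrow> ((\<lambda>r. W r \<omega>) \<longlongrightarrow> 0) (at_right 0)"
begin

lemma Y_modular: "orlicz_modular M \<Phi> (\<lambda>\<omega>. c * Y \<omega>) < \<infinity>"
  by (rule orlicz_modular_finite_if_delta2[OF _ orlicz delta2 Y_measurable Y_norm]) unfold_locales

lemma modular_small:
  assumes "0 < \<epsilon>"
  obtains r where "0 < r" "orlicz_modular M \<Phi> (\<lambda>\<omega>. c * W r \<omega>) < \<epsilon>"
proof -
  define f where "f m \<omega> = c * W (1 / real (Suc m)) \<omega>" for m \<omega>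
  have [measurable]: "W (1 / real (Suc m)) \<in> borel_measurable M" for m
    by (rule W_measurable) simp
  have radii: "filterlim (\<lambda>m. 1 / real (Suc m)) (at_right 0) sequentially"
    unfolding filterlim_at using LIMSEQ_Suc[OF lim_const_over_n[of 1]] by auto
  have "(\<lambda>m. orlicz_modular M \<Phi> (f m)) \<longlonglongrightarrow> 0"
  proof (rule orlicz_modular_decseq_tendsto_zero[OF orlicz])
    show "f m \<in> borel_measurable M" for m
      unfolding f_def by measurable
    show "\<bar>f (Suc m) \<omega>\<bar> \<le> \<bar>f m \<omega>\<bar>" if "\<omega> \<in> space M" for m \<omega>
      using W_mono[of "1 / real (Suc (Suc m))" "1 / real (Suc m)" \<omega>] W_nonneg[of _ \<omega>] that
      by (simp add: f_def abs_mult frac_le mult_left_mono)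
    show "(\<lambda>m. f m \<omega>) \<longlonglongrightarrow> 0" if "\<omega> \<in> space M" for \<omega>
      unfolding f_def
      using tendsto_mult_right_zero[OF filterlim_compose[OF W_vanishes[OF that] radii], of c] .
    have "orlicz_modular M \<Phi> (f 0) \<le> orlicz_modular M \<Phi> (\<lambda>\<omega>. c * Y \<omega>)"
    proof (rule orlicz_modular_mono[OF orlicz])
      fix \<omega> assume "\<omega> \<in> space M"
      then have "\<bar>W 1 \<omega>\<bar> \<le> \<bar>Y \<omega>\<bar>"
        using W_nonneg[of 1 \<omega>] W_le_Y[of 1 \<omega>] by simp
      then show "\<bar>f 0 \<omega>\<bar> \<le> \<bar>c * Y \<omega>\<bar>"
        by (simp add: f_def abs_mult mult_left_mono)
    qed
    then show "orlicz_modular M \<Phi> (f 0) < \<infinity>"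
      using Y_modular by (rule le_less_trans)
  qed
  then have "eventually (\<lambda>m. orlicz_modular M \<Phi> (f m) < \<epsilon>) sequentially"
    using assms by (rule order_tendstoD(2))
  then obtain m where "orlicz_modular M \<Phi> (f m) < \<epsilon>"
    by (auto simp: eventually_sequentially)
  then show ?thesis
    using that[of "1 / real (Suc m)"] by (simp add: f_def)
qed

lemma summable_radii:
  obtains \<rho> where "\<And>n. 0 < \<rho> n" "\<rho> \<longlonglongrightarrow> 0"
    "(\<Sum>n. orlicz_modular M \<Phi> (\<lambda>\<omega>. 2 ^ Suc n * W (\<rho> n) \<omega>)) < \<infinity>"
proof -
  have "\<exists>r. 0 < r \<and> orlicz_modular M \<Phi> (\<lambda>\<omega>. 2 ^ Suc n * W r \<omega>) < ennreal ((1 / 2) ^ Suc n)" for n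
    by (rule modular_small[of "ennreal ((1 / 2) ^ Suc n)" "2 ^ Suc n"]) auto
  then obtain r where r: "\<And>n. 0 < r n"
    "\<And>n. orlicz_modular M \<Phi> (\<lambda>\<omega>. 2 ^ Suc n * W (r n) \<omega>) < ennreal ((1 / 2) ^ Suc n)"
    by metis
  define \<rho> where "\<rho> n = min (r n) (1 / real (Suc n))" for n
  have \<rho>_pos: "0 < \<rho> n" for n
    using r(1) by (simp add: \<rho>_def)
  moreover have "\<rho> \<longlonglongrightarrow> 0"
    using \<rho>_pos by (intro tendsto_sandwich[OF _ _ tendsto_const LIMSEQ_Suc[OF lim_const_over_n[of 1]]])
      (auto simp: \<rho>_def less_imp_le)
  moreover have "(\<Sum>n. orlicz_modular M \<Phi> (\<lambda>\<omega>. 2 ^ Suc n * W (\<rho> n) \<omega>)) < \<infinity>"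
  proof -
    have "orlicz_modular M \<Phi> (\<lambda>\<omega>. 2 ^ Suc n * W (\<rho> n) \<omega>)
        \<le> orlicz_modular M \<Phi> (\<lambda>\<omega>. 2 ^ Suc n * W (r n) \<omega>)" for n
    proof (rule orlicz_modular_mono[OF orlicz])
      fix \<omega> assume \<omega>: "\<omega> \<in> space M"
      have "W (\<rho> n) \<omega> \<le> W (r n) \<omega>"
        by (rule W_mono[OF \<rho>_pos _ \<omega>]) (simp add: \<rho>_def)
      then show "\<bar>2 ^ Suc n * W (\<rho> n) \<omega>\<bar> \<le> \<bar>2 ^ Suc n * W (r n) \<omega>\<bar>"
        using W_nonneg[OF \<rho>_pos \<omega>] W_nonneg[OF r(1) \<omega>] by (simp add: abs_mult)
    qed
    then have "(\<Sum>n. orlicz_modular M \<Phi> (\<lambda>\<omega>. 2 ^ Suc n * W (\<rho> n) \<omega>)) \<le> (\<Sum>n. ennreal ((1 / 2) ^ Suc n))"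
      using r(2) by (intro suminf_le summableI) (meson less_imp_le order_trans)
    also have "\<dots> < \<infinity>"
      by (simp add: ennreal_suminf_neq_top less_top[symmetric])
    finally show ?thesis .
  qed
  ultimately show ?thesis by (rule that)
qed

lemma majorant:
  obtains T g where "T \<in> borel_measurable M" "\<And>\<omega>. 1 \<le> T \<omega>" "orlicz_modular M \<Phi> T < \<infinity>"
    "continuous_on UNIV g" "strict_mono_on {0..} g" "g 0 = 0"
    "AE \<omega> in M. \<forall>\<delta>>0. W \<delta> \<omega> \<le> T \<omega> * g \<delta>"
proof -
  obtain \<rho> where \<rho>: "\<And>n. 0 < \<rho> n" "\<rho> \<longlonglongrightarrow> 0"
    "(\<Sum>n. orlicz_modular M \<Phi> (\<lambda>\<omega>. 2 ^ Suc n * W (\<rho> n) \<omega>)) < \<infinity>"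
    using summable_radii by blast
  define a where "a n \<omega> = 2 ^ Suc n * W (\<rho> n) \<omega>" for n \<omega>
  have [measurable]: "W (\<rho> n) \<in> borel_measurable M" for n
    by (rule W_measurable[OF \<rho>(1)])
  have "a n \<in> borel_measurable M" for n
    unfolding a_def by measurable
  moreover have "0 \<le> a n \<omega>" if "\<omega> \<in> space M" for n \<omega>
    using W_nonneg[OF \<rho>(1) that] by (simp add: a_def)
  moreover have "(\<Sum>n. orlicz_modular M \<Phi> (a n)) < \<infinity>"
    using \<rho>(3) by (simp add: a_def)
  ultimately obtain B where B: "B \<in> borel_measurable M" "orlicz_modular M \<Phi> B < \<infinity>"
    "AE \<omega> in M. \<forall>n. a n \<omega> \<le> B \<omega>"
    by (rule orlicz_modular_summable_dominated[OF orlicz])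
  obtain g :: "real \<Rightarrow> real" where g: "continuous_on UNIV g" "strict_mono_on {0..} g" "g 0 = 0"
    "\<forall>\<delta>>0. 1 \<le> g \<delta> \<or> (\<exists>j. \<delta> \<le> \<rho> j \<and> (1 / 2) ^ Suc j \<le> g \<delta>)"
    by (rule staircase_majorant[OF \<rho>(1,2)])
  define T where "T \<omega> = max 1 (max (Y \<omega>) (B \<omega>))" for \<omega>
  have fin: "finite_measure M" by unfold_locales
  have T_meas: "T \<in> borel_measurable M"
    unfolding T_def using Y_measurable B(1) by measurable
  have YB_meas: "(\<lambda>\<omega>. max (Y \<omega>) (B \<omega>)) \<in> borel_measurable M"
    using Y_measurable B(1) by measurable
  have "orlicz_modular M \<Phi> (\<lambda>\<omega>. max (Y \<omega>) (B \<omega>)) < \<infinity>"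
    using Y_modular[of 1] by (intro orlicz_modular_max_less_top[OF fin orlicz Y_measurable _ B(1,2)]) simp
  then have T_modular: "orlicz_modular M \<Phi> T < \<infinity>"
    unfolding T_def
    by (intro orlicz_modular_max_less_top[OF fin orlicz _ _ YB_meas]) (simp_all add: emeasure_space_1)
  have T_ge: "1 \<le> T \<omega>" for \<omega>
    by (simp add: T_def)
  have bound: "AE \<omega> in M. \<forall>\<delta>>0. W \<delta> \<omega> \<le> T \<omega> * g \<delta>"
    using B(3) AE_space
  proof eventually_elim
    case (elim \<omega>)
    show ?case
    proof (intro allI impI)
      fix \<delta> :: real assume "0 < \<delta>"
      have T_pos: "0 < T \<omega>" using T_ge[of \<omega>] by simp
      from g(4)[rule_format, OF \<open>0 < \<delta>\<close>] show "W \<delta> \<omega> \<le> T \<omega> * g \<delta>"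
      proof (elim disjE exE conjE)
        assume "1 \<le> g \<delta>"
        have "W \<delta> \<omega> \<le> T \<omega>"
          using W_le_Y[OF \<open>0 < \<delta>\<close> elim(2)] by (simp add: T_def)
        also have "\<dots> \<le> T \<omega> * g \<delta>"
          using \<open>1 \<le> g \<delta>\<close> T_pos by simp
        finally show ?thesis .
      next
        fix j assume j: "\<delta> \<le> \<rho> j" "(1 / 2) ^ Suc j \<le> g \<delta>"
        have "W \<delta> \<omega> \<le> W (\<rho> j) \<omega>"
          using W_mono[OF \<open>0 < \<delta>\<close> j(1) elim(2)] .
        also have "\<dots> = (1 / 2) ^ Suc j * a j \<omega>"
          by (simp add: a_def power_one_over)
        also have "\<dots> \<le> (1 / 2) ^ Suc j * T \<omega>"
          using elim(1)[rule_format, of j] by (intro mult_left_mono) (auto simp: T_def le_max_iff_disj)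
        also have "\<dots> \<le> g \<delta> * T \<omega>"
          using j(2) T_pos by (intro mult_right_mono) auto
        finally show ?thesis by (simp add: mult.commute)
      qed
    qed
  qed
  show ?thesis
    by (rule that[OF T_meas T_ge T_modular g(1-3) bound])
qed

end

section \<open>Oscillation over close pairs\<close>

definition close_pairs :: "'a::metric_space set \<Rightarrow> real \<Rightarrow> ('a \<times> 'a) set" where
  "close_pairs S r = {(s, t). s \<in> S \<and> t \<in> S \<and> dist s t < r}"

definition pair_oscillation :: "'a::metric_space set \<Rightarrow> ('a \<Rightarrow> real) \<Rightarrow> real \<Rightarrow> real" where
  "pair_oscillation S f r = (SUP (s, t) \<in> close_pairs S r. \<bar>f s - f t\<bar>)"

lemma bdd_above_close_pair_differences:
  fixes f :: "'a::metric_space \<Rightarrow> real"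
  assumes "bounded (f ` S)"
  shows "bdd_above ((\<lambda>(s, t). \<bar>f s - f t\<bar>) ` close_pairs S r)"
proof -
  obtain B where "\<forall>y\<in>f ` S. norm y \<le> B"
    using assms unfolding bounded_iff by blast
  then have B: "\<And>s. s \<in> S \<Longrightarrow> \<bar>f s\<bar> \<le> B" by simp
  show ?thesis
  proof (rule bdd_aboveI2)
    fix p assume "p \<in> close_pairs S r"
    then obtain s t where "p = (s, t)" "s \<in> S" "t \<in> S"
      by (auto simp: close_pairs_def)
    then show "(\<lambda>(s, t). \<bar>f s - f t\<bar>) p \<le> 2 * B"
      using abs_triangle_ineq4[of "f s" "f t"] B[of s] B[of t] by simp
  qed
qed

lemma pair_oscillation_nonneg:
  assumes "bounded (f ` S)" "s \<in> S" "0 < r"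
  shows "0 \<le> pair_oscillation S f r"
proof -
  have "(s, s) \<in> close_pairs S r"
    using assms(2,3) by (simp add: close_pairs_def)
  from cSUP_upper[OF this bdd_above_close_pair_differences[OF assms(1)]] show ?thesis
    by (simp add: pair_oscillation_def)
qed

lemma pair_oscillation_mono:
  assumes "bounded (f ` S)" "s \<in> S" "0 < r" "r \<le> r'"
  shows "pair_oscillation S f r \<le> pair_oscillation S f r'"
  unfolding pair_oscillation_def
proof (rule cSUP_subset_mono)
  have "(s, s) \<in> close_pairs S r"
    using assms(2,3) by (simp add: close_pairs_def)
  then show "close_pairs S r \<noteq> {}" by blast
  show "close_pairs S r \<subseteq> close_pairs S r'"
    using assms(4) by (auto simp: close_pairs_def)
qed (simp_all add: bdd_above_close_pair_differences[OF assms(1)])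

lemma pair_oscillation_le:
  assumes "s \<in> S" "0 < r" "\<And>s. s \<in> S \<Longrightarrow> \<bar>f s\<bar> \<le> B"
  shows "pair_oscillation S f r \<le> 2 * B"
  unfolding pair_oscillation_def
proof (rule cSUP_least)
  have "(s, s) \<in> close_pairs S r"
    using assms(1,2) by (simp add: close_pairs_def)
  then show "close_pairs S r \<noteq> {}" by blast
  fix p assume "p \<in> close_pairs S r"
  then obtain s t where "p = (s, t)" "s \<in> S" "t \<in> S"
    by (auto simp: close_pairs_def)
  then show "(\<lambda>(s, t). \<bar>f s - f t\<bar>) p \<le> 2 * B"
    using abs_triangle_ineq4[of "f s" "f t"] assms(3)[of s] assms(3)[of t] by simp
qed

lemma pair_oscillation_tendsto_zero:
  assumes "uniformly_continuous_on S f" "bounded (f ` S)" "s \<in> S"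
  shows "((\<lambda>r. pair_oscillation S f r) \<longlongrightarrow> 0) (at_right 0)"
proof (rule order_tendstoI)
  fix a :: real assume "a < 0"
  have "eventually (\<lambda>r. 0 < r) (at_right (0::real))"
    by (rule eventually_at_right_less)
  then show "eventually (\<lambda>r. a < pair_oscillation S f r) (at_right 0)"
    by eventually_elim (use pair_oscillation_nonneg[OF assms(2,3)] \<open>a < 0\<close> in fastforce)
next
  fix a :: real assume "0 < a"
  then obtain d where d: "0 < d" "\<And>s t. s \<in> S \<Longrightarrow> t \<in> S \<Longrightarrow> dist s t < d \<Longrightarrow> dist (f s) (f t) < a / 2"
    using assms(1) unfolding uniformly_continuous_on_def by (metis half_gt_zero dist_commute)
  have "pair_oscillation S f r \<le> a / 2" if "0 < r" "r < d" for r
    unfolding pair_oscillation_def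
  proof (rule cSUP_least)
    have "(s, s) \<in> close_pairs S r"
      using assms(3) that(1) by (simp add: close_pairs_def)
    then show "close_pairs S r \<noteq> {}" by blast
    fix p assume "p \<in> close_pairs S r"
    then obtain s t where "p = (s, t)" "s \<in> S" "t \<in> S" "dist s t < r"
      by (auto simp: close_pairs_def)
    then show "(\<lambda>(s, t). \<bar>f s - f t\<bar>) p \<le> a / 2"
      using d(2)[of s t] \<open>r < d\<close> by (simp add: dist_real_def)
  qed
  then show "eventually (\<lambda>r. pair_oscillation S f r < a) (at_right 0)"
    unfolding eventually_at_right_field using d(1) \<open>0 < a\<close> by (intro exI[of _ d]) fastforce
qed

text \<open>Approximate a pair \<open>x, y\<close> at distance \<open>\<le> \<delta>\<close> by points of \<open>S\<close> closer than \<open>\<delta>/2\<close> to them.\<close>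
lemma modulus_cont_le_pair_oscillation:
  assumes X: "compact X" "X \<noteq> {}" and f: "continuous_on X f"
    and S: "S \<subseteq> X" "X \<subseteq> closure S" and "0 < \<delta>"
  shows "modulus_cont X f \<delta> \<le> pair_oscillation S f (2 * \<delta>)"
  unfolding modulus_cont_def
proof (rule cSUP_least)
  obtain x where "x \<in> X" using X(2) by blast
  then have "(x, x) \<in> {(x, y). x \<in> X \<and> y \<in> X \<and> dist x y \<le> \<delta>}"
    using \<open>0 < \<delta>\<close> by simp
  then show "{(x, y). x \<in> X \<and> y \<in> X \<and> dist x y \<le> \<delta>} \<noteq> {}" by blast
  have bdd: "bdd_above ((\<lambda>(s, t). \<bar>f s - f t\<bar>) ` close_pairs S (2 * \<delta>))"
    using compact_imp_bounded[OF compact_continuous_image[OF f X(1)]] S(1)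
    by (intro bdd_above_close_pair_differences) (auto intro: bounded_subset)
  have unif: "uniformly_continuous_on X f"
    by (rule compact_uniformly_continuous[OF f X(1)])
  fix p assume "p \<in> {(x, y). x \<in> X \<and> y \<in> X \<and> dist x y \<le> \<delta>}"
  then obtain x y where p: "p = (x, y)" "x \<in> X" "y \<in> X" "dist x y \<le> \<delta>" by blast
  have "\<bar>f x - f y\<bar> \<le> pair_oscillation S f (2 * \<delta>) + e" if "0 < e" for e
  proof -
    obtain d where d: "0 < d" "\<And>a b. a \<in> X \<Longrightarrow> b \<in> X \<Longrightarrow> dist a b < d \<Longrightarrow> dist (f a) (f b) < e / 2"
      using unif \<open>0 < e\<close> unfolding uniformly_continuous_on_def by (metis half_gt_zero dist_commute)
    have "0 < min d (\<delta> / 2)" using d(1) \<open>0 < \<delta>\<close> by simp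
    then obtain s t where s: "s \<in> S" "dist s x < min d (\<delta> / 2)" and t: "t \<in> S" "dist t y < min d (\<delta> / 2)"
      using S(2) p(2,3) closure_approachable by (metis subsetD)
    have "dist s t \<le> dist s x + dist x y + dist y t"
      using dist_triangle[of s t x] dist_triangle[of x t y] by linarith
    then have "(s, t) \<in> close_pairs S (2 * \<delta>)"
      using s t p(4) by (simp add: close_pairs_def dist_commute)
    then have "\<bar>f s - f t\<bar> \<le> pair_oscillation S f (2 * \<delta>)"
      unfolding pair_oscillation_def using cSUP_upper[OF _ bdd] by fastforce
    moreover have "\<bar>f s - f x\<bar> < e / 2" "\<bar>f t - f y\<bar> < e / 2"
      using d(2)[of s x] d(2)[of t y] s t S(1) p(2,3) by (auto simp: dist_real_def)
    ultimately show ?thesis by linarith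
  qed
  then show "\<bar>f (fst p) - f (snd p)\<bar> \<le> pair_oscillation S f (2 * \<delta>)"
    using p(1) by (auto intro: field_le_epsilon)
qed

lemma modulus_cont_zero:
  assumes "X \<noteq> {}" shows "modulus_cont X f 0 = 0"
proof -
  have "(\<lambda>p. \<bar>f (fst p) - f (snd p)\<bar>) ` {(x, y). x \<in> X \<and> y \<in> X \<and> dist x y \<le> 0} = {0}"
    using assms by force
  then show ?thesis unfolding modulus_cont_def by simp
qed

lemma borel_measurable_pair_oscillation:
  assumes "countable S" and meas: "\<And>s. s \<in> S \<Longrightarrow> \<eta> s \<in> borel_measurable M"
    and bounded: "\<And>\<omega>. \<omega> \<in> space M \<Longrightarrow> bounded ((\<lambda>x. \<eta> x \<omega>) ` S)"
  shows "(\<lambda>\<omega>. pair_oscillation S (\<lambda>x. \<eta> x \<omega>) r) \<in> borel_measurable M"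
  unfolding pair_oscillation_def
proof (rule borel_measurable_cSUP)
  show "countable (close_pairs S r)"
    by (rule countable_subset[of _ "S \<times> S"]) (auto simp: close_pairs_def assms(1))
  fix p assume "p \<in> close_pairs S r"
  then obtain s t where "p = (s, t)" "s \<in> S" "t \<in> S"
    by (auto simp: close_pairs_def)
  moreover note meas[OF \<open>s \<in> S\<close>, measurable] meas[OF \<open>t \<in> S\<close>, measurable]
  ultimately show "(\<lambda>\<omega>. case p of (s, t) \<Rightarrow> \<bar>\<eta> s \<omega> - \<eta> t \<omega>\<bar>) \<in> borel_measurable M"
    by simp measurable
qed (rule bdd_above_close_pair_differences[OF bounded])

section \<open>Separable random fields\<close>

lemma separable_field_dense:
  assumes "prob_space M" "separable_field M X \<xi>"
  obtains S where "countable S" "S \<subseteq> X" "X \<subseteq> closure S"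
proof -
  obtain S N where S: "countable S" "S \<subseteq> X" and N: "N \<in> null_sets M"
    and approx: "\<And>\<omega> x. \<omega> \<in> space M - N \<Longrightarrow> x \<in> X \<Longrightarrow>
      \<exists>s. (\<forall>n. s n \<in> S) \<and> s \<longlonglongrightarrow> x \<and> (\<lambda>n. \<xi> (s n) \<omega>) \<longlonglongrightarrow> \<xi> x \<omega>"
    using assms(2) unfolding separable_field_def by blast
  have "\<not> space M \<subseteq> N"
  proof
    assume "space M \<subseteq> N"
    then have "emeasure M (space M) \<le> emeasure M N"
      using N by (intro emeasure_mono) auto
    then show False
      using null_setsD1[OF N] prob_space.emeasure_space_1[OF assms(1)] by simp
  qed
  then obtain \<omega> where \<omega>: "\<omega> \<in> space M - N" by blast
  have "X \<subseteq> closure S"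
  proof
    fix x assume "x \<in> X"
    with approx[OF \<omega>] obtain s where "\<forall>n. s n \<in> S" "s \<longlonglongrightarrow> x" by blast
    then show "x \<in> closure S" unfolding closure_sequential by blast
  qed
  with S show ?thesis by (rule that)
qed

lemma dominated_vanishing_family_pair_oscillation:
  assumes "prob_space M" and \<Phi>: "orlicz_function \<Phi>" "delta2 \<Phi>"
    and X: "compact X" and S: "countable S" "S \<subseteq> X" "s0 \<in> S"
    and meas: "\<And>x. x \<in> X \<Longrightarrow> \<eta> x \<in> borel_measurable M"
    and cont: "\<And>\<omega>. continuous_on X (\<lambda>x. \<eta> x \<omega>)"
    and norm: "orlicz_norm M \<Phi> (\<lambda>\<omega>. SUP s\<in>S. \<bar>\<eta> s \<omega>\<bar>) < \<infinity>"
  shows "dominated_vanishing_family M \<Phi> (\<lambda>r \<omega>. pair_oscillation S (\<lambda>x. \<eta> x \<omega>) (2 * r))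
    (\<lambda>\<omega>. 2 * (SUP s\<in>S. \<bar>\<eta> s \<omega>\<bar>))"
proof -
  interpret prob_space M by fact
  have bounded: "bounded ((\<lambda>x. \<eta> x \<omega>) ` S)" for \<omega>
    using compact_imp_bounded[OF compact_continuous_image[OF cont X]] S(2) by (auto intro: bounded_subset)
  have bdd: "bdd_above ((\<lambda>s. \<bar>\<eta> s \<omega>\<bar>) ` S)" for \<omega>
  proof -
    obtain B where "\<forall>y\<in>(\<lambda>x. \<eta> x \<omega>) ` S. norm y \<le> B"
      using bounded[of \<omega>] unfolding bounded_iff by blast
    then show ?thesis by (auto intro!: bdd_aboveI2)
  qed
  have sup_ge: "\<bar>\<eta> s \<omega>\<bar> \<le> (SUP s\<in>S. \<bar>\<eta> s \<omega>\<bar>)" if "s \<in> S" for s \<omega>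
    using cSUP_upper[OF that bdd] .
  have sup_meas: "(\<lambda>\<omega>. SUP s\<in>S. \<bar>\<eta> s \<omega>\<bar>) \<in> borel_measurable M"
    using S meas by (intro borel_measurable_cSUP) (auto simp: bdd)
  have uniform: "uniformly_continuous_on S (\<lambda>x. \<eta> x \<omega>)" for \<omega>
    unfolding uniformly_continuous_on_def
  proof (intro allI impI)
    fix e :: real assume "0 < e"
    then obtain d where "0 < d" "\<forall>x\<in>X. \<forall>x'\<in>X. dist x' x < d \<longrightarrow> dist (\<eta> x' \<omega>) (\<eta> x \<omega>) < e"
      using compact_uniformly_continuous[OF cont X] unfolding uniformly_continuous_on_def by meson
    with S(2) show "\<exists>d>0. \<forall>x\<in>S. \<forall>x'\<in>S. dist x' x < d \<longrightarrow> dist (\<eta> x' \<omega>) (\<eta> x \<omega>) < e"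
      by (meson subsetD)
  qed
  have double: "filterlim (\<lambda>r::real. 2 * r) (at_right 0) (at_right 0)"
    unfolding filterlim_at by (auto simp: eventually_at_filter intro!: tendsto_eq_intros)
  show ?thesis
  proof unfold_locales
    show "orlicz_function \<Phi>" "delta2 \<Phi>" by (fact \<Phi>)+
    show "(\<lambda>\<omega>. 2 * (SUP s\<in>S. \<bar>\<eta> s \<omega>\<bar>)) \<in> borel_measurable M"
      using sup_meas by measurable
    have "orlicz_norm M \<Phi> (\<lambda>\<omega>. 2 * (SUP s\<in>S. \<bar>\<eta> s \<omega>\<bar>))
        = ereal 2 * orlicz_norm M \<Phi> (\<lambda>\<omega>. SUP s\<in>S. \<bar>\<eta> s \<omega>\<bar>)"
      using orlicz_norm_divide[of "1 / 2" M \<Phi> "\<lambda>\<omega>. SUP s\<in>S. \<bar>\<eta> s \<omega>\<bar>"] by (simp add: mult.commute)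
    then show "orlicz_norm M \<Phi> (\<lambda>\<omega>. 2 * (SUP s\<in>S. \<bar>\<eta> s \<omega>\<bar>)) < \<infinity>"
      using norm by (cases "orlicz_norm M \<Phi> (\<lambda>\<omega>. SUP s\<in>S. \<bar>\<eta> s \<omega>\<bar>)") auto
    fix r :: real assume "0 < r"
    then show "(\<lambda>\<omega>. pair_oscillation S (\<lambda>x. \<eta> x \<omega>) (2 * r)) \<in> borel_measurable M"
      using S meas bounded by (intro borel_measurable_pair_oscillation) auto
    fix \<omega>
    show "0 \<le> pair_oscillation S (\<lambda>x. \<eta> x \<omega>) (2 * r)"
      using \<open>0 < r\<close> by (intro pair_oscillation_nonneg[OF bounded S(3)]) simp
    show "pair_oscillation S (\<lambda>x. \<eta> x \<omega>) (2 * r) \<le> 2 * (SUP s\<in>S. \<bar>\<eta> s \<omega>\<bar>)"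
      using \<open>0 < r\<close> by (intro pair_oscillation_le[OF S(3)] sup_ge) simp_all
    fix r' :: real assume "r \<le> r'"
    then show "pair_oscillation S (\<lambda>x. \<eta> x \<omega>) (2 * r) \<le> pair_oscillation S (\<lambda>x. \<eta> x \<omega>) (2 * r')"
      using \<open>0 < r\<close> by (intro pair_oscillation_mono[OF bounded S(3)]) simp_all
  next
    fix \<omega>
    show "((\<lambda>r. pair_oscillation S (\<lambda>x. \<eta> x \<omega>) (2 * r)) \<longlongrightarrow> 0) (at_right 0)"
      using filterlim_compose[OF pair_oscillation_tendsto_zero[OF uniform bounded S(3)] double] .
  qed
qed

lemma SUP_abs_subset_le:
  fixes f :: "'a::metric_space \<Rightarrow> real"
  assumes "compact X" "continuous_on X f" "S \<subseteq> X" "s \<in> S"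
  shows "0 \<le> (SUP s\<in>S. \<bar>f s\<bar>)" and "(SUP s\<in>S. \<bar>f s\<bar>) \<le> (SUP x\<in>X. \<bar>f x\<bar>)"
proof -
  obtain B where "\<forall>y\<in>f ` X. norm y \<le> B"
    using compact_imp_bounded[OF compact_continuous_image[OF assms(2,1)]] unfolding bounded_iff by blast
  then have bdd: "bdd_above ((\<lambda>x. \<bar>f x\<bar>) ` X)"
    by (auto intro!: bdd_aboveI2)
  have "bdd_above ((\<lambda>s. \<bar>f s\<bar>) ` S)"
    by (rule bdd_above_mono[OF bdd]) (use assms(3) in auto)
  then have "\<bar>f s\<bar> \<le> (SUP s\<in>S. \<bar>f s\<bar>)"
    by (rule cSUP_upper[OF assms(4)])
  then show "0 \<le> (SUP s\<in>S. \<bar>f s\<bar>)"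
    by (rule order_trans[OF abs_ge_zero])
  show "(SUP s\<in>S. \<bar>f s\<bar>) \<le> (SUP x\<in>X. \<bar>f x\<bar>)"
    using assms(3,4) bdd by (intro cSUP_subset_mono) auto
qed

lemma AE_continuous_field_version:
  assumes cont: "AE \<omega> in M. continuous_on X (\<lambda>x. \<xi> x \<omega>)"
    and meas: "\<And>x. x \<in> X \<Longrightarrow> \<xi> x \<in> borel_measurable M"
  obtains \<eta> where "\<And>x. x \<in> X \<Longrightarrow> \<eta> x \<in> borel_measurable M" "\<And>\<omega>. continuous_on X (\<lambda>x. \<eta> x \<omega>)"
    "AE \<omega> in M. \<forall>x. \<eta> x \<omega> = \<xi> x \<omega>" "\<And>\<omega>. (\<forall>x. \<eta> x \<omega> = \<xi> x \<omega>) \<or> (\<forall>x. \<eta> x \<omega> = 0)"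
proof -
  obtain N where N: "{\<omega> \<in> space M. \<not> continuous_on X (\<lambda>x. \<xi> x \<omega>)} \<subseteq> N" "emeasure M N = 0" "N \<in> sets M"
    using cont by (rule AE_E)
  define G where "G = space M - N"
  define \<eta> where "\<eta> x \<omega> = (if \<omega> \<in> G then \<xi> x \<omega> else 0)" for x \<omega>
  have G: "G \<in> sets M" "AE \<omega> in M. \<omega> \<in> G"
    using N by (auto simp: G_def intro: AE_I'[of N])
  have "\<eta> x \<in> borel_measurable M" if "x \<in> X" for x
    using meas[OF that] G(1) unfolding \<eta>_def by measurable
  moreover have "continuous_on X (\<lambda>x. \<eta> x \<omega>)" for \<omega>
    using N(1) by (cases "\<omega> \<in> G") (auto simp: \<eta>_def G_def)
  moreover have "AE \<omega> in M. \<forall>x. \<eta> x \<omega> = \<xi> x \<omega>"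
    using G(2) by eventually_elim (simp add: \<eta>_def)
  moreover have "(\<forall>x. \<eta> x \<omega> = \<xi> x \<omega>) \<or> (\<forall>x. \<eta> x \<omega> = 0)" for \<omega>
    by (simp add: \<eta>_def)
  ultimately show ?thesis by (rule that)
qed

lemma separable_field_oscillation_family:
  assumes X: "compact X" "X \<noteq> {}" and "prob_space M"
    and meas: "\<And>x. x \<in> X \<Longrightarrow> \<xi> x \<in> borel_measurable M"
    and sep: "separable_field M X \<xi>" and cont: "AE \<omega> in M. continuous_on X (\<lambda>x. \<xi> x \<omega>)"
    and \<Phi>: "orlicz_function \<Phi>" "delta2 \<Phi>"
    and norm: "orlicz_norm M \<Phi> (\<lambda>\<omega>. SUP x\<in>X. \<bar>\<xi> x \<omega>\<bar>) < \<infinity>"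
  obtains W Y where "dominated_vanishing_family M \<Phi> W Y"
    "AE \<omega> in M. \<forall>\<delta>>0. modulus_cont X (\<lambda>x. \<xi> x \<omega>) \<delta> \<le> W \<delta> \<omega>"
proof -
  obtain S where S: "countable S" "S \<subseteq> X" "X \<subseteq> closure S"
    using separable_field_dense[OF \<open>prob_space M\<close> sep] by blast
  have "S \<noteq> {}" using S(3) X(2) by auto
  then obtain s0 where s0: "s0 \<in> S" by blast
  obtain \<eta> where \<eta>: "\<And>x. x \<in> X \<Longrightarrow> \<eta> x \<in> borel_measurable M" "\<And>\<omega>. continuous_on X (\<lambda>x. \<eta> x \<omega>)"
    "AE \<omega> in M. \<forall>x. \<eta> x \<omega> = \<xi> x \<omega>" "\<And>\<omega>. (\<forall>x. \<eta> x \<omega> = \<xi> x \<omega>) \<or> (\<forall>x. \<eta> x \<omega> = 0)"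
    using AE_continuous_field_version[OF cont meas] by blast
  have "\<bar>SUP s\<in>S. \<bar>\<eta> s \<omega>\<bar>\<bar> \<le> \<bar>SUP x\<in>X. \<bar>\<xi> x \<omega>\<bar>\<bar>" for \<omega>
  proof (cases "\<forall>x. \<eta> x \<omega> = \<xi> x \<omega>")
    case True
    then show ?thesis
      using SUP_abs_subset_le[OF X(1) \<eta>(2) S(2) s0, of \<omega>] by simp
  next
    case False
    then have "\<forall>x. \<eta> x \<omega> = 0"
      using \<eta>(4)[of \<omega>] by blast
    with \<open>S \<noteq> {}\<close> show ?thesis by (simp add: cSUP_const)
  qed
  then have "orlicz_norm M \<Phi> (\<lambda>\<omega>. SUP s\<in>S. \<bar>\<eta> s \<omega>\<bar>) \<le> orlicz_norm M \<Phi> (\<lambda>\<omega>. SUP x\<in>X. \<bar>\<xi> x \<omega>\<bar>)"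
    by (rule orlicz_norm_mono[OF \<Phi>(1)])
  then have "orlicz_norm M \<Phi> (\<lambda>\<omega>. SUP s\<in>S. \<bar>\<eta> s \<omega>\<bar>) < \<infinity>"
    using norm by (rule le_less_trans)
  then have "dominated_vanishing_family M \<Phi> (\<lambda>r \<omega>. pair_oscillation S (\<lambda>x. \<eta> x \<omega>) (2 * r))
      (\<lambda>\<omega>. 2 * (SUP s\<in>S. \<bar>\<eta> s \<omega>\<bar>))"
    by (intro dominated_vanishing_family_pair_oscillation[OF \<open>prob_space M\<close> \<Phi> X(1) S(1,2) s0] \<eta>(1,2))
  moreover have "AE \<omega> in M. \<forall>\<delta>>0. modulus_cont X (\<lambda>x. \<xi> x \<omega>) \<delta> \<le> pair_oscillation S (\<lambda>x. \<eta> x \<omega>) (2 * \<delta>)"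
    using \<eta>(3)
  proof eventually_elim
    case (elim \<omega>)
    then have "(\<lambda>x. \<xi> x \<omega>) = (\<lambda>x. \<eta> x \<omega>)" by simp
    then show ?case
      using modulus_cont_le_pair_oscillation[OF X \<eta>(2) S(2,3)] by simp
  qed
  ultimately show ?thesis by (rule that)
qed

lemma separable_field_modulus_majorant:
  assumes "compact X" "X \<noteq> {}" "prob_space M" "\<And>x. x \<in> X \<Longrightarrow> \<xi> x \<in> borel_measurable M"
    "separable_field M X \<xi>" "AE \<omega> in M. continuous_on X (\<lambda>x. \<xi> x \<omega>)"
    "orlicz_function \<Phi>" "delta2 \<Phi>" "orlicz_norm M \<Phi> (\<lambda>\<omega>. SUP x\<in>X. \<bar>\<xi> x \<omega>\<bar>) < \<infinity>"
  obtains T g where "T \<in> borel_measurable M" "\<And>\<omega>. 1 \<le> T \<omega>" "orlicz_modular M \<Phi> T < \<infinity>"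
    "continuous_on UNIV g" "strict_mono_on {0..} g" "g 0 = 0"
    "AE \<omega> in M. \<forall>\<delta>\<ge>0. modulus_cont X (\<lambda>x. \<xi> x \<omega>) \<delta> \<le> T \<omega> * g \<delta>"
proof -
  obtain W Y where family: "dominated_vanishing_family M \<Phi> W Y"
    and modulus: "AE \<omega> in M. \<forall>\<delta>>0. modulus_cont X (\<lambda>x. \<xi> x \<omega>) \<delta> \<le> W \<delta> \<omega>"
    using separable_field_oscillation_family[OF assms] by blast
  obtain T g where T: "T \<in> borel_measurable M" "\<And>\<omega>. 1 \<le> T \<omega>" "orlicz_modular M \<Phi> T < \<infinity>"
    and g: "continuous_on UNIV g" "strict_mono_on {0..} g" "g 0 = 0"
    and majorant: "AE \<omega> in M. \<forall>\<delta>>0. W \<delta> \<omega> \<le> T \<omega> * g \<delta>"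
    using dominated_vanishing_family.majorant[OF family] by blast
  have "AE \<omega> in M. \<forall>\<delta>\<ge>0. modulus_cont X (\<lambda>x. \<xi> x \<omega>) \<delta> \<le> T \<omega> * g \<delta>"
    using modulus majorant
  proof eventually_elim
    case (elim \<omega>)
    show ?case
    proof (intro allI impI)
      fix \<delta> :: real assume "0 \<le> \<delta>"
      then consider "\<delta> = 0" | "0 < \<delta>" by fastforce
      then show "modulus_cont X (\<lambda>x. \<xi> x \<omega>) \<delta> \<le> T \<omega> * g \<delta>"
      proof cases
        case 1
        then show ?thesis using modulus_cont_zero[OF assms(2)] g(3) by simp
      next
        case 2
        show ?thesis
          using elim(1)[rule_format, OF 2] elim(2)[rule_format, OF 2] by (rule order_trans)
      qed
    qed
  qed
  with T g show ?thesis by (rule that)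
qed

theorem theorem3p1:
  fixes X :: "'a::metric_space set" and M :: "'b measure"
    and \<xi> :: "'a \<Rightarrow> 'b \<Rightarrow> real" and \<Phi> :: "real \<Rightarrow> real"
  assumes "compact X" and "X \<noteq> {}"
    and "prob_space M"
    and "\<And>x. x \<in> X \<Longrightarrow> \<xi> x \<in> borel_measurable M"
    and "separable_field M X \<xi>"
    and "AE \<omega> in M. continuous_on X (\<lambda>x. \<xi> x \<omega>)"
    and "orlicz_function \<Phi>" and "delta2 \<Phi>"
    and "orlicz_norm M \<Phi> (\<lambda>\<omega>. SUP x\<in>X. \<bar>\<xi> x \<omega>\<bar>) < \<infinity>"
  shows "\<exists>\<tau>0 g. \<tau>0 \<in> borel_measurable M \<and> (\<forall>\<omega>\<in>space M. \<tau>0 \<omega> \<ge> 0) \<and>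
            orlicz_norm M \<Phi> \<tau>0 = 1 \<and>
            continuous_on {0..diameter X} g \<and> strict_mono_on {0..diameter X} g \<and>
            (\<forall>\<delta>\<in>{0..diameter X}. g \<delta> \<ge> 0) \<and> g 0 = 0 \<and>
            (g \<longlongrightarrow> 0) (at 0 within {0<..diameter X}) \<and>
            (AE \<omega> in M. \<forall>\<delta>\<in>{0..diameter X}.
                modulus_cont X (\<lambda>x. \<xi> x \<omega>) \<delta> \<le> \<tau>0 \<omega> * g \<delta>)"
proof -
  obtain T g where T: "T \<in> borel_measurable M" "\<And>\<omega>. 1 \<le> T \<omega>" "orlicz_modular M \<Phi> T < \<infinity>"
    and g: "continuous_on UNIV g" "strict_mono_on {0..} g" "g 0 = 0"
    and bound: "AE \<omega> in M. \<forall>\<delta>\<ge>0. modulus_cont X (\<lambda>x. \<xi> x \<omega>) \<delta> \<le> T \<omega> * g \<delta>"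
    using separable_field_modulus_majorant[OF assms] by blast
  have "1 \<le> \<bar>T \<omega>\<bar>" for \<omega>
    by (rule order_trans[OF T(2) abs_ge_self])
  then obtain c where c: "0 < c" "orlicz_norm M \<Phi> (\<lambda>\<omega>. T \<omega> / c) = 1"
    by (rule orlicz_norm_normalize[OF assms(3,7) T(1) _ T(3)])
  have rescale: "T \<omega> / c * (c * g \<delta>) = T \<omega> * g \<delta>" for \<omega> \<delta>
    using c(1) by simp
  have "isCont g 0"
    using g(1) by (simp add: continuous_on_eq_continuous_at)
  then have "(g \<longlongrightarrow> 0) (at 0)"
    using g(3) by (simp add: isCont_def)
  then have g_limit: "(g \<longlongrightarrow> 0) (at 0 within {0<..diameter X})"
    by (rule tendsto_within_subset) simp
  show ?thesis
  proof (intro exI[of _ "\<lambda>\<omega>. T \<omega> / c"] exI[of _ "\<lambda>\<delta>. c * g \<delta>"] conjI)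
    show "(\<lambda>\<omega>. T \<omega> / c) \<in> borel_measurable M"
      using T(1) by measurable
    show "\<forall>\<omega>\<in>space M. 0 \<le> T \<omega> / c"
      using T(2) c(1) by (simp add: less_imp_le order_trans[OF zero_le_one])
    show "continuous_on {0..diameter X} (\<lambda>\<delta>. c * g \<delta>)"
      using g(1) by (auto intro: continuous_on_subset continuous_on_mult_left)
    show "strict_mono_on {0..diameter X} (\<lambda>\<delta>. c * g \<delta>)"
      using g(2) c(1) by (auto simp: strict_mono_on_def)
    show "\<forall>\<delta>\<in>{0..diameter X}. 0 \<le> c * g \<delta>"
      using strict_mono_on_leD[OF g(2), of 0] g(3) c(1) by simp
    show "((\<lambda>\<delta>. c * g \<delta>) \<longlongrightarrow> 0) (at 0 within {0<..diameter X})"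
      using tendsto_mult_right_zero[OF g_limit] .
    show "AE \<omega> in M. \<forall>\<delta>\<in>{0..diameter X}. modulus_cont X (\<lambda>x. \<xi> x \<omega>) \<delta> \<le> T \<omega> / c * (c * g \<delta>)"
      unfolding rescale using bound by eventually_elim auto
  qed (use c(2) g(3) in simp_all)
qed

end
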